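(* Let $m\ge 1$ and let $P_{\mathcal F}$ be the set of nonzero polynomials of the form $f(z)=\sum_{k=0}^m c_k z^{\underline{k}}$ with all $c_k\in\mathbb R$, $c_k\ge0$. A complex number $w$ is a root of no polynomial in $P_{\mathcal F}$ if and only if $w\in S\cup\overline S$, where $$S=\Big\{z\in\mathbb C \ \Big|\ \mathrm{Arg}\,z\ge0\ \text{and}\ \sum_{i=1}^m\mathrm{Arg}(z-i+1)<\pi\Big\}$$ and $\overline S=\{\bar z\mid z\in S\}$.
   Context: $z^{\underline{k}}=z(z-1)\cdots(z-k+1)$, $z^{\underline 0}=1$. For nonzero $z$, $\mathrm{Arg}\,z$ is the principal argument, $-\pi<\mathrm{Arg}\,z\le\pi$; by convention $\mathrm{Arg}\,0=\infty$ (so any $z$ for which some $z-i+1=0$, $1\le i\le m$, is not in $S$). *)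

theory Defs
  imports "HOL-Analysis.Analysis"
begin

definition falling_fact :: "complex \<Rightarrow> nat \<Rightarrow> complex" where
  "falling_fact z k = (\<Prod>i<k. z - of_nat i)"

text \<open>The paper's convention Arg 0 = infinity means that any z with
  z - i + 1 = 0 for some 1 <= i <= m is excluded; we add this explicitly, and
  otherwise use the library's principal argument Arg (range (-pi, pi]).\<close>
definition S_set :: "nat \<Rightarrow> complex set" where
  "S_set m = {z. (\<forall>i\<in>{1..m}. z - of_nat i + 1 \<noteq> 0) \<and> Arg z \<ge> 0 \<and>
                 (\<Sum>i=1..m. Arg (z - of_nat i + 1)) < pi}"

definition P_F :: "nat \<Rightarrow> (complex \<Rightarrow> complex) set" where
  "P_F m = {f. \<exists>c :: nat \<Rightarrow> real. (\<forall>k\<le>m. c k \<ge> 0) \<and>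
               f = (\<lambda>z. \<Sum>k\<le>m. complex_of_real (c k) * falling_fact z k) \<and>
               f \<noteq> (\<lambda>_. 0)}"

end

theory Submission
  imports Defs
begin

text \<open>For \<open>Im z \<ge> 0\<close> the arguments \<open>falling_arg z k\<close> of the falling factorials
  \<open>falling_fact z k\<close> are nondecreasing in \<open>k\<close>. If they stay below \<open>pi\<close> up to \<open>k = m\<close>,
  all \<open>falling_fact z k\<close>, \<open>k \<le> m\<close>, lie in one open half-plane, so no nonnegative nontrivial
  combination of them vanishes. Otherwise either \<open>z\<close> is one of \<open>0, \<dots>, m - 1\<close>, or at the first
  \<open>k\<close> with \<open>falling_arg z k \<ge> pi\<close> the value \<open>falling_fact z k\<close> is a negative real or lies
  below the real axis while \<open>falling_fact z (k - 1)\<close> lies on or above it; together with the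
  constant \<open>1\<close> they admit a cancelling nonnegative combination. The lower half-plane follows
  by conjugation.\<close>

definition falling_comb :: "nat \<Rightarrow> (nat \<Rightarrow> real) \<Rightarrow> complex \<Rightarrow> complex" where
  "falling_comb m c z = (\<Sum>k\<le>m. complex_of_real (c k) * falling_fact z k)"

definition nonneg_nonzero_coeffs :: "nat \<Rightarrow> (nat \<Rightarrow> real) \<Rightarrow> bool" where
  "nonneg_nonzero_coeffs m c \<longleftrightarrow> (\<forall>k\<le>m. 0 \<le> c k) \<and> (\<exists>j\<le>m. 0 < c j)"

definition falling_arg :: "complex \<Rightarrow> nat \<Rightarrow> real" where
  "falling_arg z k = (\<Sum>i<k. Arg (z - of_nat i))"

lemma falling_fact_0 [simp]: "falling_fact z 0 = 1"
  by (simp add: falling_fact_def)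

lemma falling_fact_Suc: "falling_fact z (Suc k) = falling_fact z k * (z - of_nat k)"
  by (simp add: falling_fact_def)

lemma falling_fact_eq_0_iff: "falling_fact z k = 0 \<longleftrightarrow> (\<exists>i<k. z = of_nat i)"
  by (auto simp: falling_fact_def)

lemma falling_fact_cnj: "falling_fact (cnj z) k = cnj (falling_fact z k)"
  by (simp add: falling_fact_def)

lemma falling_fact_eq_rcis: "falling_fact z k = rcis (cmod (falling_fact z k)) (falling_arg z k)"
proof (induction k)
  case 0
  then show ?case by (simp add: falling_arg_def)
next
  case (Suc k)
  have "falling_fact z (Suc k) = rcis (cmod (falling_fact z k)) (falling_arg z k)
      * rcis (cmod (z - of_nat k)) (Arg (z - of_nat k))"
    using Suc by (simp add: falling_fact_Suc rcis_cmod_Arg)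
  then show ?case
    by (simp add: rcis_mult norm_mult falling_fact_Suc falling_arg_def)
qed

lemma falling_arg_nonneg: "0 \<le> Im z \<Longrightarrow> 0 \<le> falling_arg z k"
  unfolding falling_arg_def by (intro sum_nonneg) (simp add: Arg_less_0)

lemma falling_arg_mono: "0 \<le> Im z \<Longrightarrow> k \<le> n \<Longrightarrow> falling_arg z k \<le> falling_arg z n"
  unfolding falling_arg_def by (intro sum_mono2) (auto simp: Arg_less_0)

lemma falling_arg_Suc: "falling_arg z (Suc k) = falling_arg z k + Arg (z - of_nat k)"
  by (simp add: falling_arg_def)

lemma mem_S_set_iff:
  "z \<in> S_set m \<longleftrightarrow> falling_fact z m \<noteq> 0 \<and> 0 \<le> Im z \<and> falling_arg z m < pi"
proof -
  have "{1..m} = Suc ` {..<m}"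
    by (simp add: image_Suc_lessThan)
  then have "(\<forall>i\<in>{1..m}. z - of_nat i + 1 \<noteq> 0) \<longleftrightarrow> falling_fact z m \<noteq> 0"
    by (auto simp: falling_fact_eq_0_iff)
  then show ?thesis
    by (simp add: S_set_def falling_arg_def Arg_less_0 sum.atLeast1_atMost_eq)
qed

lemma falling_comb_add:
  "falling_comb m (\<lambda>i. c i + d i) z = falling_comb m c z + falling_comb m d z"
  by (simp add: falling_comb_def distrib_right sum.distrib)

lemma falling_comb_single:
  assumes "k \<le> m"
  shows "falling_comb m (\<lambda>i. if i = k then a else 0) z = of_real a * falling_fact z k"
proof -
  have "falling_comb m (\<lambda>i. if i = k then a else 0) z
      = (\<Sum>i\<le>m. if i = k then of_real a * falling_fact z i else 0)"
    unfolding falling_comb_def by (intro sum.cong) auto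
  then show ?thesis
    using assms by simp
qed

lemma falling_comb_nonzero:
  assumes "nonneg_nonzero_coeffs m c"
  shows "falling_comb m c \<noteq> (\<lambda>_. 0)"
proof
  assume zero: "falling_comb m c = (\<lambda>_. 0)"
  obtain j where j: "j \<le> m" "0 < c j" and c_nonneg: "\<forall>k\<le>m. 0 \<le> c k"
    using assms by (auto simp: nonneg_nonzero_coeffs_def)
  define g where "g k = (\<Prod>i<k. real j - real i)" for k
  have g_nonneg: "0 \<le> g k" for k
  proof (cases "k \<le> j")
    case True
    then show ?thesis unfolding g_def by (intro prod_nonneg) auto
  next
    case False
    then show ?thesis unfolding g_def by (subst prod_zero) auto
  qed
  have ff_j: "falling_fact (of_nat j) k = of_real (g k)" for k
    by (simp add: falling_fact_def g_def)
  have "0 < c j * g j"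
    using j unfolding g_def by (intro mult_pos_pos prod_pos) auto
  also have "\<dots> \<le> (\<Sum>k\<le>m. c k * g k)"
    by (rule member_le_sum) (use j c_nonneg g_nonneg in auto)
  also have "\<dots> = Re (falling_comb m c (of_nat j))"
    by (simp add: falling_comb_def ff_j)
  finally show False
    using zero by simp
qed

lemma P_F_eq: "P_F m = falling_comb m ` {c. nonneg_nonzero_coeffs m c}"
proof (intro equalityI subsetI)
  fix f assume "f \<in> P_F m"
  then obtain c where c: "\<forall>k\<le>m. 0 \<le> c k" "f = falling_comb m c" "f \<noteq> (\<lambda>_. 0)"
    unfolding P_F_def falling_comb_def by auto
  have "\<exists>j\<le>m. 0 < c j"
  proof (rule ccontr)
    assume "\<not> ?thesis"
    with c(1) have "\<forall>k\<le>m. c k = 0" by force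
    then have "f = (\<lambda>_. 0)" by (simp add: c(2) falling_comb_def fun_eq_iff)
    with c(3) show False ..
  qed
  with c show "f \<in> falling_comb m ` {c. nonneg_nonzero_coeffs m c}"
    by (auto simp: nonneg_nonzero_coeffs_def)
next
  fix f assume "f \<in> falling_comb m ` {c. nonneg_nonzero_coeffs m c}"
  then obtain c where "nonneg_nonzero_coeffs m c" "f = falling_comb m c" by auto
  then show "f \<in> P_F m"
    using falling_comb_nonzero unfolding P_F_def
    by (auto simp: nonneg_nonzero_coeffs_def falling_comb_def intro!: exI[of _ c])
qed

text \<open>On \<open>S_set m\<close> the arguments of \<open>falling_fact z k\<close>, \<open>k \<le> m\<close>, all lie in \<open>[0, T]\<close> with
  \<open>T < pi\<close>, so after rotating by \<open>-T/2\<close> every term has positive real part.\<close>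
lemma falling_comb_nonzero_on_S_set:
  assumes "z \<in> S_set m" "nonneg_nonzero_coeffs m c"
  shows "falling_comb m c z \<noteq> 0"
proof -
  define T where "T = falling_arg z m"
  have ff_m: "falling_fact z m \<noteq> 0" and Im_z: "0 \<le> Im z" and T_less: "T < pi"
    using assms(1) by (auto simp: mem_S_set_iff T_def)
  define u where "u k = Re (falling_fact z k * cis (- T / 2))" for k
  have u_pos: "0 < u k" if "k \<le> m" for k
  proof -
    have "falling_fact z k \<noteq> 0"
      using ff_m that by (auto simp: falling_fact_eq_0_iff)
    moreover have "cos (falling_arg z k - T / 2) > 0"
      using falling_arg_nonneg[OF Im_z, of k] falling_arg_mono[OF Im_z that] T_less
      by (intro cos_gt_zero_pi) (auto simp: T_def)
    ultimately show ?thesis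
      unfolding u_def by (subst falling_fact_eq_rcis) (simp add: cis_rcis_eq rcis_mult)
  qed
  obtain j where j: "j \<le> m" "0 < c j" and c_nonneg: "\<forall>k\<le>m. 0 \<le> c k"
    using assms(2) by (auto simp: nonneg_nonzero_coeffs_def)
  have "0 < c j * u j"
    using j u_pos by simp
  also have "\<dots> \<le> (\<Sum>k\<le>m. c k * u k)"
    by (rule member_le_sum)
      (use j c_nonneg u_pos in \<open>auto intro!: mult_nonneg_nonneg simp: less_imp_le\<close>)
  also have "\<dots> = Re (falling_comb m c z * cis (- T / 2))"
    by (simp add: u_def falling_comb_def sum_distrib_right mult.assoc)
  finally show ?thesis
    by auto
qed

text \<open>If \<open>Im v \<ge> 0\<close>, \<open>Im p \<ge> 0\<close> and \<open>Im (p * v) < 0\<close>, this writes \<open>0\<close> as a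
  nonnegative, nontrivial combination of \<open>1\<close>, \<open>p\<close> and \<open>p * v\<close>.\<close>
lemma cmod_square_Im_combination:
  "complex_of_real (cmod p ^ 2 * Im v) - of_real (Im (p * v)) * p + of_real (Im p) * (p * v) = 0"
  unfolding cmod_power2 by (simp add: complex_eq_iff algebra_simps power2_eq_square)

lemma falling_comb_root_at_arg_crossing:
  assumes Im_z: "0 \<le> Im z" and k: "Suc k \<le> m" and ff_nz: "falling_fact z (Suc k) \<noteq> 0"
    and below: "falling_arg z k < pi" and above: "pi \<le> falling_arg z (Suc k)"
  shows "\<exists>c. nonneg_nonzero_coeffs m c \<and> falling_comb m c z = 0"
proof -
  define p where "p = falling_fact z k"
  define q where "q = falling_fact z (Suc k)"
  have q_eq: "q = p * (z - of_nat k)"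
    by (simp add: p_def q_def falling_fact_Suc)
  have Im_p: "0 \<le> Im p"
    using falling_arg_nonneg[OF Im_z, of k] below
    by (subst p_def, subst falling_fact_eq_rcis) (simp add: sin_ge_zero)
  have not_above: "falling_arg z (Suc k) < 2 * pi"
    using below Arg_le_pi[of "z - of_nat k"] by (simp add: falling_arg_Suc)
  consider "falling_arg z (Suc k) = pi" | "pi < falling_arg z (Suc k)"
    using above by linarith
  then show ?thesis
  proof cases
    case 1
    define c where "c i = (if i = 0 then cmod q else 0) + (if i = Suc k then 1 else 0)" for i
    have "q = rcis (cmod q) pi"
      using 1 falling_fact_eq_rcis[of z "Suc k"] by (simp add: q_def)
    moreover have "of_real r + rcis r pi = 0" for r
      by (simp add: rcis_def)
    ultimately have "of_real (cmod q) + q = 0"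
      by metis
    moreover have "falling_comb m c z = of_real (cmod q) + q"
      using k unfolding c_def q_def by (simp add: falling_comb_add falling_comb_single)
    ultimately have "falling_comb m c z = 0"
      by simp
    moreover have "nonneg_nonzero_coeffs m c"
      using k by (auto simp: nonneg_nonzero_coeffs_def c_def intro!: exI[of _ "Suc k"])
    ultimately show ?thesis by blast
  next
    case 2
    have "Im q < 0"
      using ff_nz 2 not_above
      by (subst q_def, subst falling_fact_eq_rcis) (simp add: q_def mult_pos_neg sin_lt_zero)
    define c where "c i = (if i = 0 then cmod p ^ 2 * Im z else 0)
      + (if i = k then - Im q else 0) + (if i = Suc k then Im p else 0)" for i
    have "falling_comb m c z = of_real (cmod p ^ 2 * Im z) - of_real (Im q) * p + of_real (Im p) * q"
      using k unfolding c_def p_def q_def by (simp add: falling_comb_add falling_comb_single)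
    also have "\<dots> = 0"
      unfolding q_eq using cmod_square_Im_combination[of p "z - of_nat k"] by simp
    finally have "falling_comb m c z = 0" .
    moreover have "nonneg_nonzero_coeffs m c"
      using k Im_p \<open>Im q < 0\<close> mult_nonneg_nonneg[OF zero_le_power2[of "cmod p"] Im_z]
      by (auto simp: nonneg_nonzero_coeffs_def c_def intro!: exI[of _ k] add_nonneg_pos)
    ultimately show ?thesis by blast
  qed
qed

lemma falling_comb_root_off_S_set:
  assumes Im_z: "0 \<le> Im z" and "z \<notin> S_set m"
  shows "\<exists>c. nonneg_nonzero_coeffs m c \<and> falling_comb m c z = 0"
proof (cases "falling_fact z m = 0")
  case True
  then have "falling_comb m (\<lambda>i. if i = m then 1 else 0) z = 0"
    by (simp add: falling_comb_single)
  moreover have "nonneg_nonzero_coeffs m (\<lambda>i. if i = m then 1 else 0)"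
    by (auto simp: nonneg_nonzero_coeffs_def)
  ultimately show ?thesis by blast
next
  case False
  with assms have reached: "pi \<le> falling_arg z m"
    by (auto simp: mem_S_set_iff)
  define k where "k = (LEAST k. pi \<le> falling_arg z k)"
  have above: "pi \<le> falling_arg z k" and "k \<le> m"
    unfolding k_def by (auto intro: LeastI Least_le reached)
  moreover have "k \<noteq> 0"
  proof
    assume "k = 0"
    with above pi_gt_zero show False
      by (simp add: falling_arg_def)
  qed
  then obtain k' where k': "k = Suc k'"
    using not0_implies_Suc by blast
  moreover have "falling_arg z k' < pi"
    using not_less_Least[of k' "\<lambda>k. pi \<le> falling_arg z k"] by (simp add: k_def[symmetric] k')
  moreover have "falling_fact z k \<noteq> 0"
    using False \<open>k \<le> m\<close> by (auto simp: falling_fact_eq_0_iff)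
  ultimately show ?thesis
    using falling_comb_root_at_arg_crossing[OF Im_z] by blast
qed

lemma no_root_in_P_F_iff_S_set:
  assumes "0 \<le> Im z"
  shows "(\<forall>f\<in>P_F m. f z \<noteq> 0) \<longleftrightarrow> z \<in> S_set m"
proof
  assume no_root: "\<forall>f\<in>P_F m. f z \<noteq> 0"
  show "z \<in> S_set m"
  proof (rule ccontr)
    assume "z \<notin> S_set m"
    then obtain c where "nonneg_nonzero_coeffs m c" "falling_comb m c z = 0"
      using falling_comb_root_off_S_set[OF assms] by blast
    then show False
      using no_root by (simp add: P_F_eq)
  qed
qed (auto simp: P_F_eq falling_comb_nonzero_on_S_set)

lemma P_F_cnj: "f \<in> P_F m \<Longrightarrow> f (cnj z) = cnj (f z)"
  by (auto simp: P_F_def falling_fact_cnj)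

theorem theorem4p17:
  fixes m :: nat and w :: complex
  assumes "m \<ge> 1"
  shows "(\<forall>f\<in>P_F m. f w \<noteq> 0) \<longleftrightarrow> w \<in> S_set m \<union> cnj ` S_set m"
proof -
  have S_upper: "z \<in> S_set m \<Longrightarrow> 0 \<le> Im z" for z
    by (simp add: mem_S_set_iff)
  have mem_cnj_S: "w \<in> cnj ` S_set m \<longleftrightarrow> cnj w \<in> S_set m"
    by (metis complex_cnj_cnj image_iff)
  have cnj_roots: "(\<forall>f\<in>P_F m. f (cnj w) \<noteq> 0) \<longleftrightarrow> (\<forall>f\<in>P_F m. f w \<noteq> 0)"
    by (simp add: P_F_cnj)
  show ?thesis
  proof (cases "0 \<le> Im w")
    case True
    have "cnj w = w" if "cnj w \<in> S_set m"
      using S_upper[OF that] True by (simp add: complex_eq_iff)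
    then show ?thesis
      using no_root_in_P_F_iff_S_set[OF True] mem_cnj_S by auto
  next
    case False
    then have "w \<notin> S_set m" and "0 \<le> Im (cnj w)"
      using S_upper by auto
    then show ?thesis
      using no_root_in_P_F_iff_S_set[of "cnj w"] mem_cnj_S cnj_roots by auto
  qed
qed

end
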